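(* Let $V$ be a vertex operator algebra that is strongly generated by a single homogeneous element $u\in V$, i.e. $V$ is spanned by the vectors $u_{-k_1}u_{-k_2}\cdots u_{-k_r}\mathbf{1}$ with $r\in\mathbb{N}$ and $k_1,\dots,k_r\in\mathbb{Z}_+$. Let $n\in\mathbb{Z}_+$ and suppose that either (i) $1\le \mathrm{wt}\,u\le n$, or (ii) $\mathrm{wt}\,u=0$ and $u_{-2}\mathbf{1}\neq 0$. Then $O^L(V)\not\subset O_n^\circ(V)$.
   Context: $V$ has vacuum $\mathbf{1}$, vertex operator $Y(v,x)=\sum_{k\in\mathbb{Z}}v_kx^{-k-1}$, Virasoro operators $L(m)$, and $\mathrm{wt}\,v$ is the $L(0)$-eigenvalue of a homogeneous $v$. For $n\in\mathbb{N}$, homogeneous $a\in V$ and $b\in V$, $a\circ_n b=\mathrm{Res}_x\,(1+x)^{\mathrm{wt}\,a+n}Y(a,x)b\,x^{-2n-2}$ (extended linearly in $a$). $O_n^\circ(V)=\mathrm{span}\{a\circ_n b:a,b\in V\}$ and $O^L(V)=\{(L(-1)+L(0))v: v\in V\}$. *)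

theory Defs
  imports Complex_Main "HOL-Library.Groups_Big_Fun"
begin

text \<open>A vertex operator algebra over the complex numbers, in the sense of
Frenkel-Lepowsky-Meurman / Lepowsky-Li, presented through its modes.
Y a k b denotes the mode a_k b, i.e. Y(a,x) b = sum_k (Y a k b) x^(-k-1).
vac is the vacuum vector and om the conformal vector, L(m) = om_(m+1).\<close>

definition Lop :: "('v \<Rightarrow> int \<Rightarrow> 'v \<Rightarrow> 'v) \<Rightarrow> 'v \<Rightarrow> int \<Rightarrow> 'v \<Rightarrow> 'v" where
  "Lop Y om m = Y om (m + 1)"

definition wtspace :: "(complex \<Rightarrow> 'v \<Rightarrow> 'v) \<Rightarrow> ('v \<Rightarrow> int \<Rightarrow> 'v \<Rightarrow> 'v) \<Rightarrow> 'v \<Rightarrow> int \<Rightarrow> 'v set" where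
  "wtspace sm Y om n = {v. Lop Y om 0 v = sm (of_int n) v}"

definition is_VOA ::
  "(complex \<Rightarrow> 'v::ab_group_add \<Rightarrow> 'v) \<Rightarrow> ('v \<Rightarrow> int \<Rightarrow> 'v \<Rightarrow> 'v) \<Rightarrow> 'v \<Rightarrow> 'v \<Rightarrow> bool" where
  "is_VOA sm Y vac om \<longleftrightarrow>
     vector_space sm
   \<and> (\<forall>a k b c. Y a k (b + c) = Y a k b + Y a k c)
   \<and> (\<forall>a k s b. Y a k (sm s b) = sm s (Y a k b))
   \<and> (\<forall>a a' k b. Y (a + a') k b = Y a k b + Y a' k b)
   \<and> (\<forall>s a k b. Y (sm s a) k b = sm s (Y a k b))
   \<comment> \<open>truncation\<close>
   \<and> (\<forall>a b. \<exists>N. \<forall>k\<ge>N. Y a k b = 0)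
   \<comment> \<open>vacuum: Y(1,x) = id\<close>
   \<and> (\<forall>k b. Y vac k b = (if k = -1 then b else 0))
   \<comment> \<open>creation\<close>
   \<and> (\<forall>a k. k \<ge> 0 \<longrightarrow> Y a k vac = 0)
   \<and> (\<forall>a. Y a (-1) vac = a)
   \<comment> \<open>Jacobi identity in the form of the Borcherds identity\<close>
   \<and> (\<forall>a b c m n l.
        (\<Sum>i::nat. sm ((of_int m :: complex) gchoose i) (Y (Y a (l + int i) b) (m + n - int i) c))
      = (\<Sum>i::nat. sm ((-1) ^ i * ((of_int l :: complex) gchoose i))
            (Y a (m + l - int i) (Y b (n + int i) c)
             - sm (if even l then 1 else -1) (Y b (n + l - int i) (Y a (m + int i) c)))))
   \<comment> \<open>Virasoro relations with some central charge\<close>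
   \<and> (\<exists>cc::complex. \<forall>m k v.
        Lop Y om m (Lop Y om k v) - Lop Y om k (Lop Y om m v)
      = sm (of_int (m - k)) (Lop Y om (m + k) v)
        + (if m + k = 0 then sm ((of_int m ^ 3 - of_int m) / 12 * cc) v else 0))
   \<comment> \<open>L(-1)-derivative property: Y(L(-1)a,x) = d/dx Y(a,x)\<close>
   \<and> (\<forall>a k b. Y (Lop Y om (-1) a) k b = sm (- of_int k) (Y a (k - 1) b))
   \<comment> \<open>Z-grading by L(0)-eigenvalues, finite-dimensional, bounded below\<close>
   \<and> module.span sm (\<Union>n. wtspace sm Y om n) = UNIV
   \<and> (\<forall>n. \<exists>B. finite B \<and> module.span sm B = wtspace sm Y om n)
   \<and> (\<exists>N. \<forall>n<N. wtspace sm Y om n = {0})"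

text \<open>a \<circ>_n b for a homogeneous of weight w:
  Res_x (1+x)^(w+n) Y(a,x) b x^(-2n-2) = sum_(i>=0) binom(w+n,i) a_(i-2n-2) b.\<close>
definition circ_n ::
  "(complex \<Rightarrow> 'v::ab_group_add \<Rightarrow> 'v) \<Rightarrow> ('v \<Rightarrow> int \<Rightarrow> 'v \<Rightarrow> 'v) \<Rightarrow> nat \<Rightarrow> int \<Rightarrow> 'v \<Rightarrow> 'v \<Rightarrow> 'v" where
  "circ_n sm Y n w a b =
     (\<Sum>i::nat. sm ((of_int (w + int n) :: complex) gchoose i) (Y a (int i - 2 * int n - 2) b))"

text \<open>O_n^circ(V): span of a \<circ>_n b, a homogeneous (the extension of
  \<circ>_n to all a is linear in a, so this is the span over all a, b).\<close>
definition O_circ ::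
  "(complex \<Rightarrow> 'v::ab_group_add \<Rightarrow> 'v) \<Rightarrow> ('v \<Rightarrow> int \<Rightarrow> 'v \<Rightarrow> 'v) \<Rightarrow> 'v \<Rightarrow> nat \<Rightarrow> 'v set" where
  "O_circ sm Y om n =
     module.span sm {circ_n sm Y n w a b | a b w. a \<in> wtspace sm Y om w}"

definition O_L :: "('v::ab_group_add \<Rightarrow> int \<Rightarrow> 'v \<Rightarrow> 'v) \<Rightarrow> 'v \<Rightarrow> 'v set" where
  "O_L Y om = {Lop Y om (-1) v + Lop Y om 0 v | v. True}"

definition monom :: "('v \<Rightarrow> int \<Rightarrow> 'v \<Rightarrow> 'v) \<Rightarrow> 'v \<Rightarrow> 'v \<Rightarrow> nat list \<Rightarrow> 'v" where
  "monom Y vac u ks = foldr (\<lambda>k v. Y u (- int k) v) ks vac"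

definition strongly_generated_by ::
  "(complex \<Rightarrow> 'v::ab_group_add \<Rightarrow> 'v) \<Rightarrow> ('v \<Rightarrow> int \<Rightarrow> 'v \<Rightarrow> 'v) \<Rightarrow> 'v \<Rightarrow> 'v \<Rightarrow> bool" where
  "strongly_generated_by sm Y vac u \<longleftrightarrow>
     module.span sm {monom Y vac u ks | ks. \<forall>k\<in>set ks. k \<ge> 1} = UNIV"

end

theory Submission
  imports Defs
begin

text \<open>Since V is strongly generated by u and wt u is nonnegative, every weight of V is
nonnegative. For a of weight w, the vector a o_n b is a combination of the modes
a_(i-2n-2) b with i <= w + n, and each of them raises the weight by at least n + 1; so
O_n(V) lies in the sum of the weight spaces V_j with j > n. On the other hand
(L(-1) + L(0)) u = u_(-2) 1 + (wt u) u has a nonzero component of weight at most n,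
namely (wt u) u in case (i) and u_(-2) 1 of weight 1 in case (ii). The sum of the weight
spaces being direct, this vector is not in O_n(V).\<close>

lemma Sum_any_eq_sum_atMost:
  fixes g :: "nat \<Rightarrow> 'a::comm_monoid_add"
  assumes "\<And>i. N < i \<Longrightarrow> g i = 0"
  shows "Sum_any g = (\<Sum>i\<le>N. g i)"
  by (rule Sum_any.expand_superset) (use assms in \<open>auto simp flip: not_le\<close>)

lemma gbinomial_of_nat_eq_0: "N < i \<Longrightarrow> (of_nat N :: 'a::field_char_0) gchoose i = 0"
  by (simp add: binomial_gbinomial[symmetric])

locale voa =
  fixes sm :: "complex \<Rightarrow> 'v::ab_group_add \<Rightarrow> 'v"
    and Y :: "'v \<Rightarrow> int \<Rightarrow> 'v \<Rightarrow> 'v"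
    and vac om :: 'v
  assumes VOA: "is_VOA sm Y vac om"
begin

sublocale vector_space sm
  using VOA unfolding is_VOA_def by blast

lemma Y_add_right: "Y a k (b + c) = Y a k b + Y a k c"
  and Y_scale_right: "Y a k (sm s b) = sm s (Y a k b)"
  and Y_add_left: "Y (a + a') k b = Y a k b + Y a' k b"
  and Y_scale_left: "Y (sm s a) k b = sm s (Y a k b)"
  and Y_vac_nonneg: "0 \<le> k' \<Longrightarrow> Y a k' vac = 0"
  and Y_vac_minus1: "Y a (-1) vac = a"
  and Y_Lminus1: "Y (Lop Y om (-1) a) k b = sm (- of_int k) (Y a (k - 1) b)"
  and borcherds: "Sum_any (\<lambda>i. sm ((of_int m :: complex) gchoose i) (Y (Y a (l + int i) b) (m + n - int i) c))
      = Sum_any (\<lambda>i. sm ((-1) ^ i * ((of_int l :: complex) gchoose i))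
            (Y a (m + l - int i) (Y b (n + int i) c)
             - sm (if even l then 1 else -1) (Y b (n + l - int i) (Y a (m + int i) c))))"
  using VOA unfolding is_VOA_def by simp_all

lemma Y_zero_right: "Y a k 0 = 0"
  using Y_add_right[of a k 0 0] by simp

lemma Y_zero_left: "Y 0 k b = 0"
  using Y_add_left[of 0 0 k b] by simp

lemma Y_sum_right: "Y a k (sum f S) = (\<Sum>x\<in>S. Y a k (f x))"
  by (induct S rule: infinite_finite_induct) (simp_all add: Y_zero_right Y_add_right)

abbreviation L :: "int \<Rightarrow> 'v \<Rightarrow> 'v" where "L \<equiv> Lop Y om"

abbreviation V :: "int \<Rightarrow> 'v set" where "V \<equiv> wtspace sm Y om"

lemma mem_V_iff: "x \<in> V j \<longleftrightarrow> L 0 x = sm (of_int j) x"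
  by (simp add: wtspace_def)

lemma subspace_V: "subspace (V j)"
  unfolding subspace_def
  by (auto simp: mem_V_iff Lop_def Y_zero_right Y_add_right Y_scale_right scale_right_distrib mult.commute)

text \<open>The Borcherds identity for the conformal vector with l = 0 and m = 1.\<close>

lemma L0_commutator: "L 0 (Y a k c) - Y a k (L 0 c) = Y (L (-1) a) (k + 1) c + Y (L 0 a) k c"
proof -
  have "Sum_any (\<lambda>i. sm ((of_int 1 :: complex) gchoose i) (Y (Y om (0 + int i) a) (1 + k - int i) c))
      = Y (Y om 0 a) (1 + k) c + Y (Y om 1 a) k c"
    by (subst Sum_any_eq_sum_atMost[where N = 1]) (auto simp: gbinomial_of_nat_eq_0[where N = 1, simplified])
  moreover have "Sum_any (\<lambda>i. sm ((-1) ^ i * ((of_int 0 :: complex) gchoose i))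
            (Y om (1 + 0 - int i) (Y a (k + int i) c)
             - sm (if even (0::int) then 1 else -1) (Y a (k + 0 - int i) (Y om (1 + int i) c))))
      = Y om 1 (Y a k c) - Y a k (Y om 1 c)"
    by (subst Sum_any_eq_sum_atMost[where N = 0]) (auto simp: gbinomial_0_left)
  ultimately show ?thesis
    using borcherds[of 1 om 0 a k c] by (simp add: Lop_def add.commute)
qed

lemma Y_mem_V:
  assumes "a \<in> V w" and "c \<in> V j"
  shows "Y a k c \<in> V (w + j - k - 1)"
proof -
  have "L 0 (Y a k c) = Y (L (-1) a) (k + 1) c + Y (L 0 a) k c + Y a k (L 0 c)"
    using L0_commutator[of a k c] by (simp add: diff_eq_eq)
  also have "\<dots> = sm (- of_int (k + 1) + of_int w + of_int j) (Y a k c)"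
    using assms by (simp add: mem_V_iff Y_Lminus1 Y_scale_left Y_scale_right scale_left_distrib)
  finally show ?thesis
    by (simp add: mem_V_iff algebra_simps)
qed

lemma vac_mem_V0: "vac \<in> V 0"
  by (simp add: mem_V_iff Lop_def Y_vac_nonneg)

lemma monom_mem_V:
  assumes "u \<in> V wtu"
  shows "monom Y vac u ks \<in> V (\<Sum>k\<leftarrow>ks. wtu + int k - 1)"
proof (induction ks)
  case Nil
  then show ?case by (simp add: monom_def vac_mem_V0)
next
  case (Cons k ks)
  then show ?case
    using Y_mem_V[OF assms Cons, of "- int k"] by (simp add: monom_def algebra_simps)
qed

text \<open>Applying L(0) - j0 removes the component of weight j0 and rescales the others by
nonzero factors, so the induction hypothesis applies.\<close>

lemma V_eq_sum_other_weights_imp_0: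
  assumes "finite S" and "m \<notin> S" and "\<forall>j\<in>S. w j \<in> V j" and "z \<in> V m" and "z = (\<Sum>j\<in>S. w j)"
  shows "z = 0"
  using assms
proof (induction S arbitrary: w z)
  case empty
  then show ?case by simp
next
  case (insert j0 S)
  have L0_z: "L 0 z = sm (of_int j0) (w j0) + (\<Sum>j\<in>S. sm (of_int j) (w j))"
    using insert.hyps insert.prems(2,4) by (simp add: Lop_def Y_add_right Y_sum_right mem_V_iff)
  have scale_z: "sm (of_int j0) z = sm (of_int j0) (w j0) + (\<Sum>j\<in>S. sm (of_int j0) (w j))"
    using insert.hyps insert.prems(4) by (simp add: scale_right_distrib scale_sum_right)
  have "sm (of_int (m - j0)) z = L 0 z - sm (of_int j0) z"
    using insert.prems(3) by (simp add: mem_V_iff scale_left_diff_distrib)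
  also have "\<dots> = (\<Sum>j\<in>S. sm (of_int (j - j0)) (w j))"
    unfolding L0_z scale_z by (simp add: scale_left_diff_distrib sum_subtractf)
  finally have "sm (of_int (m - j0)) z = (\<Sum>j\<in>S. sm (of_int (j - j0)) (w j))" .
  then have "sm (of_int (m - j0)) z = 0"
    by (rule insert.IH[rotated -1]) (use insert.prems in \<open>auto intro: subspace_scale[OF subspace_V]\<close>)
  then show ?case
    using insert.prems by simp
qed

lemma span_V_decomp:
  assumes "x \<in> span (\<Union>j\<in>A. V j)"
  obtains S w where "finite S" "S \<subseteq> A" "\<forall>j\<in>S. w j \<in> V j" "x = (\<Sum>j\<in>S. w j)"
proof -
  obtain t r where t: "finite t" "t \<subseteq> (\<Union>j\<in>A. V j)" and x: "x = (\<Sum>v\<in>t. sm (r v) v)"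
    using assms unfolding span_explicit by blast
  define wt where "wt v = (SOME j. j \<in> A \<and> v \<in> V j)" for v
  have wt: "wt v \<in> A \<and> v \<in> V (wt v)" if "v \<in> t" for v
    unfolding wt_def by (rule someI_ex) (use that t(2) in blast)
  show ?thesis
  proof
    show "finite (wt ` t)" and "wt ` t \<subseteq> A"
      using t(1) wt by auto
    show "\<forall>j\<in>wt ` t. (\<Sum>v | v \<in> t \<and> wt v = j. sm (r v) v) \<in> V j"
      using wt by (force intro!: subspace_sum[OF subspace_V] subspace_scale[OF subspace_V])
    show "x = (\<Sum>j\<in>wt ` t. \<Sum>v | v \<in> t \<and> wt v = j. sm (r v) v)"
      unfolding x by (rule sum.image_gen[OF t(1)])
  qed
qed

lemma V_inter_span_other_weights:
  assumes "z \<in> V m" and "z \<in> span (\<Union>j\<in>A. V j)" and "m \<notin> A"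
  shows "z = 0"
proof -
  obtain S w where "finite S" "S \<subseteq> A" "\<forall>j\<in>S. w j \<in> V j" "z = (\<Sum>j\<in>S. w j)"
    using span_V_decomp[OF assms(2)] .
  then show ?thesis
    using assms V_eq_sum_other_weights_imp_0 by blast
qed

lemma span_nonneg_weights_eq_UNIV:
  assumes "u \<in> V wtu" and "0 \<le> wtu" and "strongly_generated_by sm Y vac u"
  shows "span (\<Union>j\<in>{0..}. V j) = UNIV"
proof -
  have "monom Y vac u ks \<in> (\<Union>j\<in>{0..}. V j)" if "\<forall>k\<in>set ks. 1 \<le> k" for ks
  proof -
    have "0 \<le> (\<Sum>k\<leftarrow>ks. wtu + int k - 1)"
      using that assms(2) by (intro sum_list_nonneg) auto
    then show ?thesis
      using monom_mem_V[OF assms(1)] by blast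
  qed
  then have "span {monom Y vac u ks | ks. \<forall>k\<in>set ks. 1 \<le> k} \<subseteq> span (\<Union>j\<in>{0..}. V j)"
    by (intro span_mono) blast
  then show ?thesis
    using assms(3) unfolding strongly_generated_by_def by auto
qed

lemma Y_mem_span_weights_ge:
  assumes "a \<in> V w" and "b \<in> span (\<Union>j\<in>{p..}. V j)" and "k \<le> w + p - q - 1"
  shows "Y a k b \<in> span (\<Union>j\<in>{q..}. V j)"
  using assms(2)
proof (induction rule: span_induct_alt)
  case base
  then show ?case by (simp add: Y_zero_right span_zero)
next
  case (step c v y)
  then obtain j where "p \<le> j" and "v \<in> V j"
    by blast
  then have "Y a k v \<in> V (w + j - k - 1)" and "q \<le> w + j - k - 1"
    using Y_mem_V[OF assms(1)] assms(3) by auto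
  then have "Y a k v \<in> span (\<Union>j\<in>{q..}. V j)"
    by (blast intro: span_base)
  then show ?case
    using step.IH by (simp add: Y_add_right Y_scale_right span_add span_scale)
qed

lemma circ_n_mem_span_high_weights:
  assumes "a \<in> V w" and nonneg: "span (\<Union>j\<in>{0..}. V j) = UNIV"
  shows "circ_n sm Y n w a b \<in> span (\<Union>j\<in>{int n + 1..}. V j)"
proof (cases "w < 0")
  case True
  then have "a = 0"
    using V_inter_span_other_weights[OF assms(1), of "{0..}"] nonneg by simp
  then show ?thesis
    by (simp add: circ_n_def Y_zero_left span_zero)
next
  case False
  then have "(of_int (w + int n) :: complex) = of_nat (nat (w + int n))"
    by simp
  then have "circ_n sm Y n w a b
      = (\<Sum>i\<le>nat (w + int n). sm (of_int (w + int n) gchoose i) (Y a (int i - 2 * int n - 2) b))"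
    unfolding circ_n_def by (intro Sum_any_eq_sum_atMost) (simp add: gbinomial_of_nat_eq_0)
  also have "\<dots> \<in> span (\<Union>j\<in>{int n + 1..}. V j)"
    using False nonneg by (intro span_sum span_scale Y_mem_span_weights_ge[OF assms(1), where p = 0]) auto
  finally show ?thesis .
qed

lemma O_circ_subset_span_high_weights:
  assumes "span (\<Union>j\<in>{0..}. V j) = UNIV"
  shows "O_circ sm Y om n \<subseteq> span (\<Union>j\<in>{int n + 1..}. V j)"
  unfolding O_circ_def
  by (rule span_minimal) (auto intro: circ_n_mem_span_high_weights[OF _ assms])

lemma L_minus1_plus_L0:
  assumes "u \<in> V wtu"
  shows "L (-1) u + L 0 u = Y u (-2) vac + sm (of_int wtu) u"
proof -
  have "L (-1) u = Y u (-2) vac"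
    using Y_Lminus1[of u "-1" vac] by (simp add: Y_vac_minus1)
  then show ?thesis
    using assms by (simp add: mem_V_iff)
qed

lemma L_minus1_plus_L0_not_in_span_high_weights:
  assumes u: "u \<in> V wtu" "u \<noteq> 0"
    and wt: "(1 \<le> wtu \<and> wtu \<le> int n) \<or> (wtu = 0 \<and> Y u (-2) vac \<noteq> 0)"
    and "1 \<le> n"
  shows "L (-1) u + L 0 u \<notin> span (\<Union>j\<in>{int n + 1..}. V j)"
proof
  assume high: "L (-1) u + L 0 u \<in> span (\<Union>j\<in>{int n + 1..}. V j)"
  have u_minus2: "Y u (-2) vac \<in> V (wtu + 1)"
    using Y_mem_V[OF u(1) vac_mem_V0, of "-2"] by (simp add: add.commute)
  from wt show False
  proof (elim disjE conjE)
    assume "1 \<le> wtu" and "wtu \<le> int n"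
    let ?A = "{int n + 1..} \<union> {wtu + 1}"
    have "span (\<Union>j\<in>{int n + 1..}. V j) \<subseteq> span (\<Union>j\<in>?A. V j)"
      by (intro span_mono) auto
    then have "Y u (-2) vac + sm (of_int wtu) u \<in> span (\<Union>j\<in>?A. V j)"
      using high unfolding L_minus1_plus_L0[OF u(1)] by blast
    moreover have "Y u (-2) vac \<in> span (\<Union>j\<in>?A. V j)"
      using u_minus2 by (intro span_base) blast
    ultimately have "sm (of_int wtu) u \<in> span (\<Union>j\<in>?A. V j)"
      using span_diff by fastforce
    with subspace_scale[OF subspace_V u(1)] have "sm (of_int wtu) u = 0"
      by (rule V_inter_span_other_weights) (use \<open>wtu \<le> int n\<close> in simp)
    then show False
      using u(2) \<open>1 \<le> wtu\<close> by simp
  next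
    assume "wtu = 0" and "Y u (-2) vac \<noteq> 0"
    moreover have "Y u (-2) vac \<in> span (\<Union>j\<in>{int n + 1..}. V j)"
      using high unfolding L_minus1_plus_L0[OF u(1)] \<open>wtu = 0\<close> by simp
    ultimately show False
      using V_inter_span_other_weights[OF u_minus2] \<open>1 \<le> n\<close> by simp
  qed
qed

end

theorem theorem4p1:
  fixes sm :: "complex \<Rightarrow> 'v::ab_group_add \<Rightarrow> 'v"
    and Y :: "'v \<Rightarrow> int \<Rightarrow> 'v \<Rightarrow> 'v"
    and vac om u :: 'v and wtu :: int and n :: nat
  assumes "is_VOA sm Y vac om"
    and "u \<noteq> 0" and "u \<in> wtspace sm Y om wtu"
    and "strongly_generated_by sm Y vac u"
    and "n \<ge> 1"
    and "(1 \<le> wtu \<and> wtu \<le> int n) \<or> (wtu = 0 \<and> Y u (-2) vac \<noteq> 0)"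
  shows "\<not> (O_L Y om \<subseteq> O_circ sm Y om n)"
proof
  assume O_L_subset: "O_L Y om \<subseteq> O_circ sm Y om n"
  interpret voa sm Y vac om
    using assms(1) by unfold_locales
  have "span (\<Union>j\<in>{0..}. V j) = UNIV"
    using span_nonneg_weights_eq_UNIV[OF assms(3) _ assms(4)] assms(6) by auto
  then have "O_L Y om \<subseteq> span (\<Union>j\<in>{int n + 1..}. V j)"
    using O_L_subset O_circ_subset_span_high_weights by blast
  moreover have "L (-1) u + L 0 u \<in> O_L Y om"
    unfolding O_L_def by blast
  ultimately show False
    using L_minus1_plus_L0_not_in_span_high_weights[OF assms(3,2,6,5)] by blast
qed

end
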